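(* Let $(X,G)$ be an abstract real spectrum. For $a,b\in G$ define $a+b=D^t(a,b)$, $-a=(-1)\cdot a$, and let $\cdot$ be pointwise multiplication, $0$ and $1$ the constant functions. Then $(G,+,\cdot,-,0,1)$ is a real reduced multiring.
   Context: For a set $X$, $\{-1,0,1\}^X$ is a monoid under pointwise multiplication. An abstract real spectrum (ARS) is a pair $(X,G)$ such that: (AX1) $X$ is a non-empty set, $G$ is a submonoid of $\{-1,0,1\}^X$ containing the constant functions $-1,0,1$, and $G$ separates points of $X$. For $a,b\in G$, $D(a,b)$ is the set of $c\in G$ such that for all $x\in X$: $a(x)c(x)>0$ or $b(x)c(x)>0$ or $c(x)=0$; and $D^t(a,b)$ is the set of $c\in G$ such that for all $x\in X$: $a(x)c(x)>0$ or $b(x)c(x)>0$ or ($c(x)=0$ and $b(x)=-a(x)$). (AX2) If $P$ is a submonoid of $G$ with $P\cup -P=G$, $-1\notin P$, $a,b\in P\Rightarrow D(a,b)\subseteq P$, and $ab\in P\cap -P\Rightarrow a\in P\cap-P$ or $b\in P\cap -P$, then there is $x\in X$ with $P=\{a\in G:a(x)\ge 0\}$. (AX3) For all $a,b,c\in G$: if $p\in D^t(a,q)$ for some $q\in D^t(b,c)$, then $p\in D^t(r,c)$ for some $r\in D^t(a,b)$. A multiring is a tuple $(R,+,\cdot,-,0,1)$ with $+:R\times R\to\mathcal P(R)\setminus\{\emptyset\}$ satisfying: $z\in x+y\Rightarrow x\in z+(-y)$ and $y\in(-x)+z$; $y\in0+x\iff y=x$; $+$ associative (with $Z+w=\bigcup_{z\in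 Z}(z+w)$) and commutative; $(R,\cdot,1)$ a commutative monoid; $a0=0$; $c\in a+b\Rightarrow cd\in ad+bd$. A multiring $A$ is real reduced if $1\neq 0$ and for all $a,b,c,d\in A$: $a^3=a$; $c\in a+ab^2\Rightarrow c=a$; $c,d\in a^2+b^2\Rightarrow c=d$. *)

theory Defs
  imports Main
begin

(* X is represented by the type 'x (X = UNIV, non-empty automatically);
   elements of {-1,0,1}^X are functions 'x => int with values in {-1,0,1}. *)

definition sgnfuns :: "('x \<Rightarrow> int) set" where
  "sgnfuns = {f. \<forall>x. f x \<in> {-1, 0, 1}}"

definition pmul :: "('x \<Rightarrow> int) \<Rightarrow> ('x \<Rightarrow> int) \<Rightarrow> ('x \<Rightarrow> int)" where
  "pmul a b = (\<lambda>x. a x * b x)"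

definition cst :: "int \<Rightarrow> ('x \<Rightarrow> int)" where
  "cst k = (\<lambda>_. k)"

definition D :: "('x \<Rightarrow> int) set \<Rightarrow> ('x \<Rightarrow> int) \<Rightarrow> ('x \<Rightarrow> int) \<Rightarrow> ('x \<Rightarrow> int) set" where
  "D G a b = {c \<in> G. \<forall>x. a x * c x > 0 \<or> b x * c x > 0 \<or> c x = 0}"

definition Dt :: "('x \<Rightarrow> int) set \<Rightarrow> ('x \<Rightarrow> int) \<Rightarrow> ('x \<Rightarrow> int) \<Rightarrow> ('x \<Rightarrow> int) set" where
  "Dt G a b = {c \<in> G. \<forall>x. a x * c x > 0 \<or> b x * c x > 0 \<or> (c x = 0 \<and> b x = - a x)}"

definition negset :: "('x \<Rightarrow> int) set \<Rightarrow> ('x \<Rightarrow> int) set" where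
  "negset P = (\<lambda>a. pmul (cst (-1)) a) ` P"

definition ARS :: "('x \<Rightarrow> int) set \<Rightarrow> bool" where
  "ARS G \<longleftrightarrow>
     \<comment> \<open>AX1\<close>
     G \<subseteq> sgnfuns \<and>
     (\<forall>a\<in>G. \<forall>b\<in>G. pmul a b \<in> G) \<and>
     cst (-1) \<in> G \<and> cst 0 \<in> G \<and> cst 1 \<in> G \<and>
     (\<forall>x y. x \<noteq> y \<longrightarrow> (\<exists>a\<in>G. a x \<noteq> a y)) \<and>
     \<comment> \<open>AX2\<close>
     (\<forall>P. (P \<subseteq> G \<and> cst 1 \<in> P \<and> (\<forall>a\<in>P. \<forall>b\<in>P. pmul a b \<in> P)
           \<and> P \<union> negset P = G \<and> cst (-1) \<notin> P
           \<and> (\<forall>a\<in>P. \<forall>b\<in>P. D G a b \<subseteq> P)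
           \<and> (\<forall>a\<in>G. \<forall>b\<in>G. pmul a b \<in> P \<inter> negset P \<longrightarrow>
                 a \<in> P \<inter> negset P \<or> b \<in> P \<inter> negset P))
          \<longrightarrow> (\<exists>x. P = {a \<in> G. a x \<ge> 0})) \<and>
     \<comment> \<open>AX3\<close>
     (\<forall>a\<in>G. \<forall>b\<in>G. \<forall>c\<in>G. \<forall>p q.
        q \<in> Dt G b c \<and> p \<in> Dt G a q \<longrightarrow> (\<exists>r \<in> Dt G a b. p \<in> Dt G r c))"

definition setadd :: "('a \<Rightarrow> 'a \<Rightarrow> 'a set) \<Rightarrow> 'a set \<Rightarrow> 'a \<Rightarrow> 'a set" where
  "setadd add Z w = (\<Union>z\<in>Z. add z w)"

definition multiring ::
  "'a set \<Rightarrow> ('a \<Rightarrow> 'a \<Rightarrow> 'a set) \<Rightarrow> ('a \<Rightarrow> 'a \<Rightarrow> 'a) \<Rightarrow> ('a \<Rightarrow> 'a) \<Rightarrow> 'a \<Rightarrow> 'a \<Rightarrow> bool" where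
  "multiring R add mul neg zero one \<longleftrightarrow>
     zero \<in> R \<and> one \<in> R \<and>
     (\<forall>x\<in>R. neg x \<in> R) \<and>
     (\<forall>x\<in>R. \<forall>y\<in>R. mul x y \<in> R) \<and>
     (\<forall>x\<in>R. \<forall>y\<in>R. add x y \<subseteq> R \<and> add x y \<noteq> {}) \<and>
     (\<forall>x\<in>R. \<forall>y\<in>R. \<forall>z\<in>R. z \<in> add x y \<longrightarrow> x \<in> add z (neg y) \<and> y \<in> add (neg x) z) \<and>
     (\<forall>x\<in>R. \<forall>y\<in>R. y \<in> add zero x \<longleftrightarrow> y = x) \<and>
     (\<forall>x\<in>R. \<forall>y\<in>R. \<forall>w\<in>R. setadd add (add x y) w = (\<Union>v\<in>add y w. add x v)) \<and>
     (\<forall>x\<in>R. \<forall>y\<in>R. add x y = add y x) \<and>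
     (\<forall>x\<in>R. \<forall>y\<in>R. \<forall>z\<in>R. mul (mul x y) z = mul x (mul y z)) \<and>
     (\<forall>x\<in>R. \<forall>y\<in>R. mul x y = mul y x) \<and>
     (\<forall>x\<in>R. mul x one = x) \<and>
     (\<forall>a\<in>R. mul a zero = zero) \<and>
     (\<forall>a\<in>R. \<forall>b\<in>R. \<forall>c\<in>R. \<forall>d\<in>R. c \<in> add a b \<longrightarrow> mul c d \<in> add (mul a d) (mul b d))"

definition real_reduced_multiring ::
  "'a set \<Rightarrow> ('a \<Rightarrow> 'a \<Rightarrow> 'a set) \<Rightarrow> ('a \<Rightarrow> 'a \<Rightarrow> 'a) \<Rightarrow> ('a \<Rightarrow> 'a) \<Rightarrow> 'a \<Rightarrow> 'a \<Rightarrow> bool" where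
  "real_reduced_multiring R add mul neg zero one \<longleftrightarrow>
     multiring R add mul neg zero one \<and>
     one \<noteq> zero \<and>
     (\<forall>a\<in>R. mul a (mul a a) = a) \<and>
     (\<forall>a\<in>R. \<forall>b\<in>R. \<forall>c\<in>R. c \<in> add a (mul a (mul b b)) \<longrightarrow> c = a) \<and>
     (\<forall>a\<in>R. \<forall>b\<in>R. \<forall>c\<in>R. \<forall>d\<in>R.
        c \<in> add (mul a a) (mul b b) \<and> d \<in> add (mul a a) (mul b b) \<longrightarrow> c = d)"

end

theory Submission
  imports Defs
begin

text \<open>Pointwise, \<open>Dt G a b\<close> is the sum of the sign hyperfield on \<open>{-1, 0, 1}\<close> (the relation
  \<open>sign_sum\<close> below). Hence every multiring and reducedness axiom except associativity and
  non-emptiness of sums is a finite check on signs, lifted pointwise to \<open>G\<close>; those two are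
  precisely what AX3 provides.\<close>

definition sign_sum :: "int \<Rightarrow> int \<Rightarrow> int \<Rightarrow> bool" where
  "sign_sum a b c \<longleftrightarrow> a * c > 0 \<or> b * c > 0 \<or> (c = 0 \<and> b = - a)"

lemma mem_Dt_iff: "c \<in> Dt G a b \<longleftrightarrow> c \<in> G \<and> (\<forall>x. sign_sum (a x) (b x) (c x))"
  by (simp add: Dt_def sign_sum_def)

lemma Dt_subset: "Dt G a b \<subseteq> G"
  by (auto simp: mem_Dt_iff)

lemma Dt_commute: "Dt G a b = Dt G b a"
  by (auto simp: Dt_def)

lemma pmul_apply [simp]: "pmul a b x = a x * b x"
  by (simp add: pmul_def)

lemma cst_apply [simp]: "cst k x = k"
  by (simp add: cst_def)

lemma sign_sum_reverse:
  "a \<in> {-1, 0, 1} \<Longrightarrow> b \<in> {-1, 0, 1} \<Longrightarrow> c \<in> {-1, 0, 1} \<Longrightarrow> sign_sum a b c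
    \<Longrightarrow> sign_sum c (- b) a"
  by (auto simp: sign_sum_def)

lemma sign_sum_zero_left: "b \<in> {-1, 0, 1} \<Longrightarrow> c \<in> {-1, 0, 1} \<Longrightarrow> sign_sum 0 b c \<longleftrightarrow> c = b"
  by (auto simp: sign_sum_def)

lemma sign_sum_zero_right: "a \<in> {-1, 0, 1} \<Longrightarrow> sign_sum a 0 a"
  by (auto simp: sign_sum_def)

lemma sign_sum_opposite: "sign_sum b (- b) 0"
  by (simp add: sign_sum_def)

lemma sign_sum_mult:
  "a \<in> {-1, 0, 1} \<Longrightarrow> b \<in> {-1, 0, 1} \<Longrightarrow> c \<in> {-1, 0, 1} \<Longrightarrow> d \<in> {-1, 0, 1}
    \<Longrightarrow> sign_sum a b c \<Longrightarrow> sign_sum (a * d) (b * d) (c * d)"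
  by (auto simp: sign_sum_def)

lemma sign_sum_absorb_square:
  "a \<in> {-1, 0, 1} \<Longrightarrow> b \<in> {-1, 0, 1} \<Longrightarrow> c \<in> {-1, 0, 1}
    \<Longrightarrow> sign_sum a (a * (b * b)) c \<Longrightarrow> c = a"
  by (auto simp: sign_sum_def)

lemma sign_sum_squares_unique:
  "a \<in> {-1, 0, 1} \<Longrightarrow> b \<in> {-1, 0, 1} \<Longrightarrow> c \<in> {-1, 0, 1} \<Longrightarrow> d \<in> {-1, 0, 1}
    \<Longrightarrow> sign_sum (a * a) (b * b) c \<Longrightarrow> sign_sum (a * a) (b * b) d \<Longrightarrow> c = d"
  by (auto simp: sign_sum_def)

lemma sign_cube: "a \<in> {-1, 0, 1::int} \<Longrightarrow> a * (a * a) = a"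
  by auto

lemma sign_valued: "G \<subseteq> sgnfuns \<Longrightarrow> f \<in> G \<Longrightarrow> f x \<in> {-1, 0, 1}"
  by (auto simp: sgnfuns_def)

lemma Dt_reverse:
  assumes G: "G \<subseteq> sgnfuns" and "x \<in> G" "y \<in> G" "z \<in> Dt G x y"
  shows "x \<in> Dt G z (pmul (cst (-1)) y)"
proof -
  have "z \<in> G" and z: "\<And>p. sign_sum (x p) (y p) (z p)"
    using assms(4) by (auto simp: mem_Dt_iff)
  then show ?thesis
    using sign_sum_reverse[OF sign_valued[OF G \<open>x \<in> G\<close>] sign_valued[OF G \<open>y \<in> G\<close>]
        sign_valued[OF G \<open>z \<in> G\<close>] z] \<open>x \<in> G\<close>
    by (simp add: mem_Dt_iff)
qed

lemma Dt_zero_left: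
  assumes G: "G \<subseteq> sgnfuns" and "x \<in> G" "y \<in> G"
  shows "y \<in> Dt G (cst 0) x \<longleftrightarrow> y = x"
  using sign_sum_zero_left[OF sign_valued[OF G \<open>x \<in> G\<close>] sign_valued[OF G \<open>y \<in> G\<close>]]
    \<open>y \<in> G\<close>
  by (auto simp: mem_Dt_iff fun_eq_iff)

lemma Dt_mult:
  assumes G: "G \<subseteq> sgnfuns" "\<forall>a\<in>G. \<forall>b\<in>G. pmul a b \<in> G"
    and "a \<in> G" "b \<in> G" "c \<in> G" "d \<in> G" "c \<in> Dt G a b"
  shows "pmul c d \<in> Dt G (pmul a d) (pmul b d)"
proof -
  have "sign_sum (a p * d p) (b p * d p) (c p * d p)" for p
    using sign_sum_mult[OF sign_valued[OF G(1) \<open>a \<in> G\<close>] sign_valued[OF G(1) \<open>b \<in> G\<close>]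
        sign_valued[OF G(1) \<open>c \<in> G\<close>] sign_valued[OF G(1) \<open>d \<in> G\<close>]] \<open>c \<in> Dt G a b\<close>
    by (simp add: mem_Dt_iff)
  then show ?thesis using G(2) \<open>c \<in> G\<close> \<open>d \<in> G\<close> by (simp add: mem_Dt_iff)
qed

lemma Dt_absorb_square:
  assumes G: "G \<subseteq> sgnfuns" and "a \<in> G" "b \<in> G" "c \<in> Dt G a (pmul a (pmul b b))"
  shows "c = a"
proof
  fix p
  have "c \<in> G" using assms(4) by (simp add: mem_Dt_iff)
  then show "c p = a p"
    using sign_sum_absorb_square[OF sign_valued[OF G \<open>a \<in> G\<close>, of p]
        sign_valued[OF G \<open>b \<in> G\<close>, of p] sign_valued[OF G \<open>c \<in> G\<close>, of p]] assms(4)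
    by (simp add: mem_Dt_iff)
qed

lemma Dt_squares_unique:
  assumes G: "G \<subseteq> sgnfuns" and "a \<in> G" "b \<in> G"
    and "c \<in> Dt G (pmul a a) (pmul b b)" "d \<in> Dt G (pmul a a) (pmul b b)"
  shows "c = d"
proof
  fix p
  have "c \<in> G" "d \<in> G" using assms(4,5) by (simp_all add: mem_Dt_iff)
  then show "c p = d p"
    using sign_sum_squares_unique[OF sign_valued[OF G \<open>a \<in> G\<close>, of p]
        sign_valued[OF G \<open>b \<in> G\<close>, of p] sign_valued[OF G \<open>c \<in> G\<close>, of p]
        sign_valued[OF G \<open>d \<in> G\<close>, of p]] assms(4,5)
    by (simp add: mem_Dt_iff)
qed

lemma pmul_cube: "G \<subseteq> sgnfuns \<Longrightarrow> a \<in> G \<Longrightarrow> pmul a (pmul a a) = a"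
  by (rule ext) (simp add: sign_cube[OF sign_valued])

lemma ARS_D:
  assumes "ARS G"
  shows "G \<subseteq> sgnfuns" "\<forall>a\<in>G. \<forall>b\<in>G. pmul a b \<in> G"
    and "cst (-1) \<in> G" "cst 0 \<in> G" "cst 1 \<in> G"
    and "\<forall>a\<in>G. \<forall>b\<in>G. \<forall>c\<in>G. \<forall>p q.
          q \<in> Dt G b c \<and> p \<in> Dt G a q \<longrightarrow> (\<exists>r \<in> Dt G a b. p \<in> Dt G r c)"
  using assms unfolding ARS_def by simp_all

lemma ARS_Dt_transfer:
  "ARS G \<Longrightarrow> a \<in> G \<Longrightarrow> b \<in> G \<Longrightarrow> c \<in> G \<Longrightarrow> q \<in> Dt G b c \<Longrightarrow> p \<in> Dt G a q
    \<Longrightarrow> \<exists>r \<in> Dt G a b. p \<in> Dt G r c"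
  using ARS_D(6) by blast

text \<open>AX3 applied to \<open>a \<in> a + 0\<close> and \<open>0 \<in> b + (-b)\<close>.\<close>

lemma Dt_nonempty:
  assumes "ARS G" "a \<in> G" "b \<in> G"
  shows "Dt G a b \<noteq> {}"
proof -
  note G = ARS_D[OF assms(1)]
  have "pmul (cst (-1)) b \<in> G" using G(2,3) assms(3) by blast
  moreover have "cst 0 \<in> Dt G b (pmul (cst (-1)) b)"
    using G(4) sign_sum_opposite by (simp add: mem_Dt_iff)
  moreover have "a \<in> Dt G a (cst 0)"
    using assms(2) sign_sum_zero_right[OF sign_valued[OF G(1) assms(2)]] by (simp add: mem_Dt_iff)
  ultimately show ?thesis using ARS_Dt_transfer assms by blast
qed

text \<open>AX3 is the inclusion \<open>a + (b + c) \<subseteq> (a + b) + c\<close>; commutativity turns it into the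
  reverse inclusion.\<close>

lemma Dt_assoc:
  assumes "ARS G" "x \<in> G" "y \<in> G" "w \<in> G"
  shows "setadd (Dt G) (Dt G x y) w = (\<Union>v\<in>Dt G y w. Dt G x v)"
proof (intro equalityI subsetI)
  note transfer = ARS_Dt_transfer[OF assms(1)]
  fix p
  assume "p \<in> setadd (Dt G) (Dt G x y) w"
  then obtain q where "q \<in> Dt G y x" "p \<in> Dt G w q"
    by (auto simp: setadd_def Dt_commute)
  then obtain r where "r \<in> Dt G w y" "p \<in> Dt G r x"
    using transfer assms(2-4) by blast
  then show "p \<in> (\<Union>v\<in>Dt G y w. Dt G x v)" by (auto simp: Dt_commute)
next
  note transfer = ARS_Dt_transfer[OF assms(1)]
  fix p
  assume "p \<in> (\<Union>v\<in>Dt G y w. Dt G x v)"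
  then obtain q where "q \<in> Dt G y w" "p \<in> Dt G x q" by blast
  then obtain r where "r \<in> Dt G x y" "p \<in> Dt G r w"
    using transfer assms(2-4) by blast
  then show "p \<in> setadd (Dt G) (Dt G x y) w" by (auto simp: setadd_def)
qed

lemma ARS_multiring:
  assumes "ARS G"
  shows "multiring G (Dt G) pmul (\<lambda>a. pmul (cst (-1)) a) (cst 0) (cst 1)"
proof -
  note G = ARS_D[OF assms]
  have "\<forall>x\<in>G. pmul (cst (-1)) x \<in> G" using G(2,3) by blast
  moreover have "\<forall>x\<in>G. \<forall>y\<in>G. Dt G x y \<subseteq> G \<and> Dt G x y \<noteq> {}"
    using Dt_subset Dt_nonempty[OF assms] by blast
  moreover have "\<forall>x\<in>G. \<forall>y\<in>G. \<forall>z\<in>G. z \<in> Dt G x y \<longrightarrow>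
      x \<in> Dt G z (pmul (cst (-1)) y) \<and> y \<in> Dt G (pmul (cst (-1)) x) z"
    using Dt_reverse[OF G(1)] Dt_commute by metis
  moreover have "\<forall>x\<in>G. \<forall>y\<in>G. y \<in> Dt G (cst 0) x \<longleftrightarrow> y = x"
    using Dt_zero_left[OF G(1)] by blast
  moreover have "\<forall>x\<in>G. \<forall>y\<in>G. \<forall>w\<in>G.
      setadd (Dt G) (Dt G x y) w = (\<Union>v\<in>Dt G y w. Dt G x v)"
    using Dt_assoc[OF assms] by blast
  moreover have "\<forall>x\<in>G. \<forall>y\<in>G. Dt G x y = Dt G y x"
    using Dt_commute by blast
  moreover have "\<forall>a\<in>G. \<forall>b\<in>G. \<forall>c\<in>G. \<forall>d\<in>G.
      c \<in> Dt G a b \<longrightarrow> pmul c d \<in> Dt G (pmul a d) (pmul b d)"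
    using Dt_mult[OF G(1,2)] by blast
  moreover have "(\<forall>x\<in>G. \<forall>y\<in>G. \<forall>z\<in>G. pmul (pmul x y) z = pmul x (pmul y z)) \<and>
      (\<forall>x\<in>G. \<forall>y\<in>G. pmul x y = pmul y x) \<and> (\<forall>x\<in>G. pmul x (cst 1) = x) \<and>
      (\<forall>a\<in>G. pmul a (cst 0) = cst 0)"
    by (simp add: fun_eq_iff ac_simps)
  ultimately show ?thesis
    unfolding multiring_def using G(2,4,5) by blast
qed

theorem theorem4p3:
  fixes G :: "('x \<Rightarrow> int) set"
  assumes "ARS G"
  shows "real_reduced_multiring G (Dt G) pmul (\<lambda>a. pmul (cst (-1)) a) (cst 0) (cst 1)"
proof -
  have sign_valued_G: "G \<subseteq> sgnfuns" using ARS_D(1)[OF assms] .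
  have "cst 1 \<noteq> (cst 0 :: 'x \<Rightarrow> int)" by (simp add: fun_eq_iff)
  then show ?thesis
    unfolding real_reduced_multiring_def
    using ARS_multiring[OF assms] pmul_cube[OF sign_valued_G]
      Dt_absorb_square[OF sign_valued_G] Dt_squares_unique[OF sign_valued_G]
    by blast
qed

end
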